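(* Let $f$ be a pairwise social choice correspondence that satisfies strong Condorcet-consistency, strategyproofness, and homogeneity. Then $k_f\ge4$.
   Context: Let $A$ be a finite set of $m$ alternatives; a preference profile $R$ assigns a strict total order $\succ_i$ on $A$ to each voter $i$ of a finite non-empty electorate $N\subseteq\{1,2,\dots\}$; $\mathcal{R}^*(A)$ is the set of all profiles. $g_R(x,y)=|\{i: x\succ_i y\}|-|\{i: y\succ_i x\}|$; $x\succsim_R y$ iff $g_R(x,y)\ge0$, strict part $\succ_R$. A Condorcet winner is $x$ with $x\succ_R y$ for all $y\ne x$. A non-empty $X$ is dominant if $x\succ_R y$ for all $x\in X,y\notin X$; $\mathrm{TC}(R)$ is the inclusion-smallest dominant set. An SCC is $f:\mathcal{R}^*(A)\to 2^A\setminus\{\emptyset\}$; pairwise: $f(R)=f(R')$ whenever $g_R=g_{R'}$; homogeneous: $f(kR)=f(R)$ for $k$ copies $kR$ of $R$; strongly Condorcet-consistent: $f(R)=\{x\}$ iff $x$ is the Condorcet winner. Fishburn's extension: for $X\ne Y$, $X\succ_i^F Y$ iff $x\succ_i y$ for all $x\in X\setminus Y,y\in Y$ and for all $x\in X,y\in Y\setminus X$; $f$ is strategyproof if no voter $i$ can change only his own preference to move from $R$ to $R'$ with $f(R')\succ_i^F f(R)$. For an SCC $f$, $k_f\in\{1,\dots,m+1\}$ is the maximal value such that $\mathrm{TC}(R)\subseteq f(R)$ for all profiles $R$ with $|\mathrm{TC}(R)|<k_f$. *)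

theory Defs
  imports Main
begin

text \<open>Alternatives: the finite type 'a (A = UNIV, m = CARD('a)).\<close>

type_synonym 'a profile = "nat \<Rightarrow> ('a \<times> 'a) set option"

definition is_profile :: "'a profile \<Rightarrow> bool" where
  "is_profile R \<longleftrightarrow> finite (dom R) \<and> dom R \<noteq> {} \<and> 0 \<notin> dom R \<and>
     (\<forall>i \<in> dom R. strict_linear_order_on UNIV (the (R i)))"

definition margin :: "'a profile \<Rightarrow> 'a \<Rightarrow> 'a \<Rightarrow> int" where
  "margin R x y = int (card {i \<in> dom R. (x, y) \<in> the (R i)})
                 - int (card {i \<in> dom R. (y, x) \<in> the (R i)})"

definition maj_strict :: "'a profile \<Rightarrow> 'a \<Rightarrow> 'a \<Rightarrow> bool" where
  "maj_strict R x y \<longleftrightarrow> margin R x y \<ge> 0 \<and> \<not> margin R y x \<ge> 0"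

definition condorcet_winner :: "'a profile \<Rightarrow> 'a \<Rightarrow> bool" where
  "condorcet_winner R x \<longleftrightarrow> (\<forall>y. y \<noteq> x \<longrightarrow> maj_strict R x y)"

definition dominant :: "'a profile \<Rightarrow> 'a set \<Rightarrow> bool" where
  "dominant R X \<longleftrightarrow> X \<noteq> {} \<and> (\<forall>x \<in> X. \<forall>y. y \<notin> X \<longrightarrow> maj_strict R x y)"

definition TC :: "'a profile \<Rightarrow> 'a set" where
  "TC R = (THE X. dominant R X \<and> (\<forall>Y. dominant R Y \<longrightarrow> X \<subseteq> Y))"

definition is_SCC :: "('a profile \<Rightarrow> 'a set) \<Rightarrow> bool" where
  "is_SCC f \<longleftrightarrow> (\<forall>R. is_profile R \<longrightarrow> f R \<noteq> {})"

definition pairwise_scc :: "('a profile \<Rightarrow> 'a set) \<Rightarrow> bool" where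
  "pairwise_scc f \<longleftrightarrow> (\<forall>R R'. is_profile R \<longrightarrow> is_profile R' \<longrightarrow>
       margin R = margin R' \<longrightarrow> f R = f R')"

text \<open>R' consists of k copies of R: each voter of R is replaced by exactly k voters
  with the same preference.\<close>
definition copies :: "nat \<Rightarrow> 'a profile \<Rightarrow> 'a profile \<Rightarrow> bool" where
  "copies k R R' \<longleftrightarrow> (\<exists>\<sigma>. (\<forall>j \<in> dom R'. \<sigma> j \<in> dom R \<and> R' j = R (\<sigma> j)) \<and>
       (\<forall>i \<in> dom R. card {j \<in> dom R'. \<sigma> j = i} = k))"

definition homogeneous :: "('a profile \<Rightarrow> 'a set) \<Rightarrow> bool" where
  "homogeneous f \<longleftrightarrow> (\<forall>k R R'. k \<ge> 1 \<longrightarrow> is_profile R \<longrightarrow> is_profile R' \<longrightarrow>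
       copies k R R' \<longrightarrow> f R' = f R)"

definition strongly_condorcet_consistent :: "('a profile \<Rightarrow> 'a set) \<Rightarrow> bool" where
  "strongly_condorcet_consistent f \<longleftrightarrow>
     (\<forall>R x. is_profile R \<longrightarrow> (f R = {x} \<longleftrightarrow> condorcet_winner R x))"

definition fishburn :: "('a \<times> 'a) set \<Rightarrow> 'a set \<Rightarrow> 'a set \<Rightarrow> bool" where
  "fishburn P X Y \<longleftrightarrow> X \<noteq> Y \<and>
     (\<forall>x \<in> X - Y. \<forall>y \<in> Y. (x, y) \<in> P) \<and> (\<forall>x \<in> X. \<forall>y \<in> Y - X. (x, y) \<in> P)"

definition strategyproof :: "('a profile \<Rightarrow> 'a set) \<Rightarrow> bool" where
  "strategyproof f \<longleftrightarrow> (\<forall>R R' i. is_profile R \<longrightarrow> is_profile R' \<longrightarrow> i \<in> dom R \<longrightarrow>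
       dom R' = dom R \<longrightarrow> (\<forall>j. j \<noteq> i \<longrightarrow> R' j = R j) \<longrightarrow>
       \<not> fishburn (the (R i)) (f R') (f R))"

definition k_f :: "('a::finite profile \<Rightarrow> 'a set) \<Rightarrow> nat" where
  "k_f f = Max {k \<in> {1..card (UNIV :: 'a set) + 1}.
      \<forall>R. is_profile R \<longrightarrow> card (TC R) < k \<longrightarrow> TC R \<subseteq> f R}"

end

(*
  Since f is pairwise, it induces a choice function on realizable margin functions.
  Strategyproofness is only applied to a voter who ranks s directly above t and swaps the two:
  adding such a voter together with his reverse does not change the margins, and the swap adds 2
  to the margin of t over s. Every change of the outcome except a few (swap_consistent) is a
  Fishburn improvement for some ranking of this kind, so the outcome can only react to such a
  swap in restricted ways. Together with Condorcet-consistency this settles top cycles with one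
  or two alternatives. For a top cycle a, b, c with nonnegative cyclic margins one inducts on
  their sum: lowering the margin of c over a either keeps the shape with a smaller sum or makes a
  the Condorcet winner, and in both cases c stays chosen. What remains, by parity, is a triangle
  with a single nonzero edge; it is reached from the fully tied triangle, in which all three
  alternatives are chosen by a case analysis on the cube of profiles that raise each of its
  three margins by 0 or 2.
*)

theory Submission
  imports Defs "HOL-Library.Product_Lexorder"
begin

section \<open>Margins\<close>

lemma margin_swap: "margin R y x = - margin R x y"
  by (simp add: margin_def)

lemma maj_strict_iff_margin_pos: "maj_strict R x y \<longleftrightarrow> 0 < margin R x y"
  using margin_swap[of R x y] by (auto simp: maj_strict_def)

definition vote_margin :: "'a rel \<Rightarrow> 'a \<Rightarrow> 'a \<Rightarrow> int" where
  "vote_margin P x y = of_bool ((x, y) \<in> P) - of_bool ((y, x) \<in> P)"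

lemma vote_margin_converse: "vote_margin (P\<inverse>) x y = - vote_margin P x y"
  by (simp add: vote_margin_def)

lemma margin_fun_upd_fresh:
  assumes "finite (dom R)" "i \<notin> dom R"
  shows "margin (R(i \<mapsto> P)) x y = margin R x y + vote_margin P x y"
proof -
  have "card {j \<in> dom (R(i \<mapsto> P)). (u, v) \<in> the ((R(i \<mapsto> P)) j)}
      = of_bool ((u, v) \<in> P) + card {j \<in> dom R. (u, v) \<in> the (R j)}" for u v :: 'a
  proof -
    have split: "{j \<in> dom (R(i \<mapsto> P)). (u, v) \<in> the ((R(i \<mapsto> P)) j)}
        = (if (u, v) \<in> P then {i} else {}) \<union> {j \<in> dom R. (u, v) \<in> the (R j)}"
      using assms(2) by auto
    show ?thesis
      unfolding split using assms by (cases "(u, v) \<in> P") auto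
  qed
  then show ?thesis
    by (simp add: margin_def vote_margin_def)
qed

lemma strict_linear_order_asym: "strict_linear_order P \<Longrightarrow> (x, y) \<in> P \<Longrightarrow> (y, x) \<notin> P"
  unfolding strict_linear_order_on_def trans_on_def irrefl_def by blast

lemma strict_linear_order_total: "strict_linear_order P \<Longrightarrow> x \<noteq> y \<Longrightarrow> (x, y) \<in> P \<or> (y, x) \<in> P"
  unfolding strict_linear_order_on_def total_on_def by blast

lemma int_card_dom_eq_margin:
  assumes "is_profile R" "x \<noteq> y"
  shows "int (card (dom R)) = margin R x y + 2 * int (card {i \<in> dom R. (y, x) \<in> the (R i)})"
proof -
  let ?A = "{i \<in> dom R. (x, y) \<in> the (R i)}" and ?B = "{i \<in> dom R. (y, x) \<in> the (R i)}"
  have "dom R = ?A \<union> ?B"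
    using assms by (auto simp: is_profile_def dest: strict_linear_order_total)
  then have "card (dom R) = card (?A \<union> ?B)"
    by (rule arg_cong)
  also have "\<dots> = card ?A + card ?B"
    using assms(1)
    by (intro card_Un_disjoint) (auto simp: is_profile_def dest: strict_linear_order_asym)
  finally show ?thesis
    by (simp add: margin_def)
qed

lemma margin_parity:
  assumes "is_profile R" "x \<noteq> y" "u \<noteq> v"
  shows "even (margin R x y - margin R u v)"
proof -
  obtain n m :: int
    where "int (card (dom R)) = margin R x y + 2 * n" "int (card (dom R)) = margin R u v + 2 * m"
    using int_card_dom_eq_margin[OF assms(1,2)] int_card_dom_eq_margin[OF assms(1,3)] by blast
  then have diff: "margin R x y - margin R u v = 2 * m - 2 * n"
    by linarith
  show ?thesis
    unfolding diff by simp
qed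

definition realizable :: "('a \<Rightarrow> 'a \<Rightarrow> int) \<Rightarrow> bool" where
  "realizable h \<longleftrightarrow> (\<exists>R. is_profile R \<and> margin R = h)"

lemma realizable_parity:
  assumes "realizable h" "x \<noteq> y" "u \<noteq> v"
  shows "even (h x y - h u v)"
proof -
  obtain R where "is_profile R" "margin R = h"
    using assms(1) by (auto simp: realizable_def)
  then show ?thesis
    using margin_parity[of R x y u v] assms(2,3) by blast
qed

lemma realizable_swap: "realizable h \<Longrightarrow> h y x = - h x y"
  unfolding realizable_def by (metis margin_swap)

definition edge_margin :: "'a \<Rightarrow> 'a \<Rightarrow> 'a \<Rightarrow> 'a \<Rightarrow> int" where
  "edge_margin a b x y = (if (x, y) = (a, b) then 1 else if (x, y) = (b, a) then -1 else 0)"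

lemma edge_margin_swap: "a \<noteq> b \<Longrightarrow> edge_margin b a x y = - edge_margin a b x y"
  by (simp add: edge_margin_def)

text \<open>The effect on the margins of one voter moving \<open>t\<close> from directly below \<open>s\<close> to
  directly above it.\<close>

definition shift_margin :: "'a \<Rightarrow> 'a \<Rightarrow> ('a \<Rightarrow> 'a \<Rightarrow> int) \<Rightarrow> 'a \<Rightarrow> 'a \<Rightarrow> int" where
  "shift_margin t s h x y = h x y + 2 * edge_margin t s x y"

section \<open>Adjacent swaps\<close>

definition rank_order :: "('a \<Rightarrow> 'b::linorder) \<Rightarrow> 'a rel" where
  "rank_order r = {(x, y). r x < r y}"

lemma strict_linear_order_rank_order: "inj r \<Longrightarrow> strict_linear_order (rank_order r)"
  unfolding rank_order_def strict_linear_order_on_def trans_on_def irrefl_def total_on_def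
  by (auto simp: inj_eq) (metis injD linorder_neqE)

definition adjacent :: "('a \<Rightarrow> 'b::linorder) \<Rightarrow> 'a \<Rightarrow> 'a \<Rightarrow> bool" where
  "adjacent r s t \<longleftrightarrow> r s < r t \<and> (\<nexists>x. r s < r x \<and> r x < r t)"

lemma adjacent_less_iff:
  assumes "inj r" "adjacent r s t" "x \<noteq> s" "x \<noteq> t"
  shows "r x < r s \<longleftrightarrow> r x < r t" "r s < r x \<longleftrightarrow> r t < r x"
proof -
  have "r x \<noteq> r s" "r x \<noteq> r t"
    using assms by (auto dest: injD)
  then show "r x < r s \<longleftrightarrow> r x < r t" "r s < r x \<longleftrightarrow> r t < r x"
    using assms(2) unfolding adjacent_def by (meson less_trans linorder_neqE)+
qed

lemma vote_margin_rank_order_swap: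
  assumes "inj r" "adjacent r s t"
  shows "vote_margin (rank_order (r(s := r t, t := r s))) x y
       = vote_margin (rank_order r) x y + 2 * edge_margin t s x y"
proof -
  have "s \<noteq> t" "r s < r t"
    using assms(2) unfolding adjacent_def by auto
  then show ?thesis
    using adjacent_less_iff[OF assms, of x] adjacent_less_iff[OF assms, of y]
    by (auto simp: vote_margin_def rank_order_def edge_margin_def)
qed

lemma adjacent_rank_exists:
  fixes key :: "'a::finite \<Rightarrow> nat"
  assumes "s \<noteq> t" "key s = key t"
  obtains r :: "'a \<Rightarrow> nat \<times> nat"
  where "inj r" "adjacent r s t" "\<And>x y. key x < key y \<Longrightarrow> r x < r y"
proof -
  obtain \<iota> :: "'a \<Rightarrow> nat" where "inj \<iota>"
    using finite_imp_inj_to_nat_seg[OF finite_UNIV] by blast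
  define r where "r x = (key x, if x = s then 0 else if x = t then 1 else \<iota> x + 2)" for x
  have "inj r"
    using \<open>inj \<iota>\<close> assms(1) by (auto simp: inj_def r_def split: if_splits)
  moreover have "adjacent r s t"
    using assms by (auto simp: adjacent_def r_def)
  moreover have "r x < r y" if "key x < key y" for x y
    using that by (simp add: r_def)
  ultimately show ?thesis
    using that by blast
qed

lemma profile_with_swapping_voter:
  assumes "is_profile R" "inj r" "adjacent r s t"
  obtains R1 R2 i where "is_profile R1" "is_profile R2" "i \<in> dom R1" "dom R2 = dom R1"
    "\<And>j. j \<noteq> i \<Longrightarrow> R2 j = R1 j" "the (R1 i) = rank_order r"
    "margin R1 = margin R" "margin R2 = shift_margin t s (margin R)"
proof -
  let ?Q = "rank_order r" and ?Q' = "rank_order (r(s := r t, t := r s))"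
  have fin: "finite (dom R)"
    using assms(1) by (simp add: is_profile_def)
  obtain i where i: "i \<notin> insert 0 (dom R)"
    using ex_new_if_finite[OF infinite_UNIV_nat, of "insert 0 (dom R)"] fin by auto
  obtain j where j: "j \<notin> insert i (insert 0 (dom R))"
    using ex_new_if_finite[OF infinite_UNIV_nat, of "insert i (insert 0 (dom R))"] fin by auto
  have "inj (r(s := r t, t := r s))"
    using assms(2,3) by (auto simp: inj_def adjacent_def)
  then have orders: "strict_linear_order ?Q" "strict_linear_order ?Q'"
    using assms(2) by (simp_all add: strict_linear_order_rank_order)
  then have "strict_linear_order (?Q\<inverse>)"
    by (simp add: strict_linear_order_on_def)
  txt \<open>Two fresh voters with mutually reverse rankings cancel out in the margins.\<close>
  define R1 where "R1 = R(i \<mapsto> ?Q, j \<mapsto> ?Q\<inverse>)"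
  define R2 where "R2 = R(i \<mapsto> ?Q', j \<mapsto> ?Q\<inverse>)"
  have "is_profile R1" "is_profile R2"
    using assms(1) i j orders \<open>strict_linear_order (?Q\<inverse>)\<close>
    by (auto simp: is_profile_def R1_def R2_def)
  moreover have "margin R1 = margin R"
    using fin i j by (simp add: fun_eq_iff R1_def margin_fun_upd_fresh vote_margin_converse)
  moreover have "margin R2 = shift_margin t s (margin R)"
    using fin i j assms(2,3)
    by (simp add: fun_eq_iff R2_def margin_fun_upd_fresh vote_margin_converse
        vote_margin_rank_order_swap shift_margin_def)
  ultimately show ?thesis
    by (intro that[of R1 R2 i]) (use i j in \<open>auto simp: R1_def R2_def\<close>)
qed

lemma realizable_shift_margin:
  fixes h :: "'a::finite \<Rightarrow> 'a \<Rightarrow> int"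
  assumes "realizable h" "s \<noteq> t"
  shows "realizable (shift_margin t s h)"
proof -
  obtain R where R: "is_profile R" "margin R = h"
    using assms(1) by (auto simp: realizable_def)
  obtain r :: "'a \<Rightarrow> nat \<times> nat" where r: "inj r" "adjacent r s t"
    using assms(2) by (rule adjacent_rank_exists[of s t "\<lambda>_. 0"]) simp_all
  obtain R2 where "is_profile R2" "margin R2 = shift_margin t s (margin R)"
    by (rule profile_with_swapping_voter[OF R(1) r])
  then show ?thesis
    using R(2) by (auto simp: realizable_def)
qed

lemma realizable_edge_shift:
  fixes h :: "'a::finite \<Rightarrow> 'a \<Rightarrow> int"
  assumes "realizable h" "a \<noteq> b"
  shows "realizable (\<lambda>x y. h x y + 2 * n * edge_margin a b x y)"
proof (induction n rule: int_induct[where k = 0])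
  case base
  then show ?case
    using assms(1) by simp
next
  case (step1 n)
  have "realizable (shift_margin a b (\<lambda>x y. h x y + 2 * n * edge_margin a b x y))"
    using step1.IH assms(2)[symmetric] by (rule realizable_shift_margin)
  moreover have "shift_margin a b (\<lambda>x y. h x y + 2 * n * edge_margin a b x y)
      = (\<lambda>x y. h x y + 2 * (n + 1) * edge_margin a b x y)"
    unfolding shift_margin_def fun_eq_iff by (simp add: algebra_simps)
  ultimately show ?case
    by simp
next
  case (step2 n)
  have "realizable (shift_margin b a (\<lambda>x y. h x y + 2 * n * edge_margin a b x y))"
    using step2.IH assms(2) by (rule realizable_shift_margin)
  moreover have "shift_margin b a (\<lambda>x y. h x y + 2 * n * edge_margin a b x y)
      = (\<lambda>x y. h x y + 2 * (n - 1) * edge_margin a b x y)"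
    unfolding shift_margin_def fun_eq_iff edge_margin_swap[OF assms(2)] by (simp add: algebra_simps)
  ultimately show ?case
    by simp
qed

section \<open>Dominant sets and Condorcet winners\<close>

definition cw_margin :: "('a \<Rightarrow> 'a \<Rightarrow> int) \<Rightarrow> 'a \<Rightarrow> bool" where
  "cw_margin h x \<longleftrightarrow> (\<forall>y. y \<noteq> x \<longrightarrow> 0 < h x y)"

lemma condorcet_winner_iff_cw_margin: "condorcet_winner R x \<longleftrightarrow> cw_margin (margin R) x"
  by (simp add: condorcet_winner_def cw_margin_def maj_strict_iff_margin_pos)

definition dominant_margin :: "('a \<Rightarrow> 'a \<Rightarrow> int) \<Rightarrow> 'a set \<Rightarrow> bool" where
  "dominant_margin h X \<longleftrightarrow> (\<forall>x\<in>X. \<forall>y. y \<notin> X \<longrightarrow> 0 < h x y)"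

lemma dominant_iff_dominant_margin: "dominant R X \<longleftrightarrow> X \<noteq> {} \<and> dominant_margin (margin R) X"
  by (simp add: dominant_def dominant_margin_def maj_strict_iff_margin_pos)

lemma dominant_subset_or_superset: "dominant R X \<Longrightarrow> dominant R Y \<Longrightarrow> X \<subseteq> Y \<or> Y \<subseteq> X"
  unfolding dominant_def maj_strict_def by blast

lemma least_dominant_exists:
  fixes R :: "'a::finite profile"
  shows "\<exists>X. dominant R X \<and> (\<forall>Y. dominant R Y \<longrightarrow> X \<subseteq> Y)"
proof -
  have "UNIV \<in> {X. dominant R X}"
    by (simp add: dominant_def)
  then obtain X where X: "dominant R X" and minimal: "\<And>Y. dominant R Y \<Longrightarrow> Y \<subseteq> X \<Longrightarrow> X = Y"
    using finite_has_minimal[of "{X. dominant R X}"] by auto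
  have "X \<subseteq> Y" if "dominant R Y" for Y
    using dominant_subset_or_superset[OF X that] minimal[OF that] by blast
  with X show ?thesis
    by blast
qed

lemma TC_least_dominant:
  fixes R :: "'a::finite profile"
  shows "dominant R (TC R)" "dominant R Y \<Longrightarrow> TC R \<subseteq> Y"
proof -
  have "dominant R (TC R) \<and> (\<forall>Y. dominant R Y \<longrightarrow> TC R \<subseteq> Y)"
    unfolding TC_def
    by (rule theI') (use least_dominant_exists[of R] in \<open>blast intro: subset_antisym\<close>)
  then show "dominant R (TC R)" "dominant R Y \<Longrightarrow> TC R \<subseteq> Y"
    by blast+
qed

lemma dominant_margin_subset:
  "dominant_margin h T \<Longrightarrow> S \<subseteq> T \<Longrightarrow> \<forall>x\<in>S. \<forall>y\<in>T - S. 0 < h x y \<Longrightarrow> dominant_margin h S"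
  unfolding dominant_margin_def by blast

lemma TC_minimal:
  fixes R :: "'a::finite profile"
  assumes "S \<noteq> {}" "S \<subset> TC R"
  shows "\<not> (\<forall>x\<in>S. \<forall>y\<in>TC R - S. 0 < margin R x y)"
proof
  assume "\<forall>x\<in>S. \<forall>y\<in>TC R - S. 0 < margin R x y"
  then have "dominant R S"
    using dominant_margin_subset[of "margin R" "TC R" S] TC_least_dominant(1)[of R] assms
    by (auto simp: dominant_iff_dominant_margin)
  then show False
    using TC_least_dominant(2) assms(2) by blast
qed

lemma cw_margin_dominant_iff:
  assumes "\<And>x y. h y x = - h x y" "dominant_margin h X" "X \<noteq> {}"
  shows "cw_margin h x \<longleftrightarrow> x \<in> X \<and> (\<forall>y\<in>X. y \<noteq> x \<longrightarrow> 0 < h x y)"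
proof
  assume winner: "cw_margin h x"
  have "x \<in> X"
  proof (rule ccontr)
    assume "x \<notin> X"
    moreover obtain z where "z \<in> X"
      using assms(3) by blast
    ultimately have "0 < h z x" "0 < h x z"
      using assms(2) winner unfolding dominant_margin_def cw_margin_def by auto
    then show False
      using assms(1)[of x z] by simp
  qed
  then show "x \<in> X \<and> (\<forall>y\<in>X. y \<noteq> x \<longrightarrow> 0 < h x y)"
    using winner by (simp add: cw_margin_def)
next
  assume "x \<in> X \<and> (\<forall>y\<in>X. y \<noteq> x \<longrightarrow> 0 < h x y)"
  then show "cw_margin h x"
    using assms(2) unfolding cw_margin_def dominant_margin_def by blast
qed

lemma cw_margin_triangle_iff:
  assumes "\<And>x y. h y x = - h x y" "dominant_margin h {a, b, c}"
    and "a \<noteq> b" "b \<noteq> c" "a \<noteq> c"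
  shows "cw_margin h x \<longleftrightarrow>
    (x = a \<and> 0 < h a b \<and> h c a < 0) \<or> (x = b \<and> 0 < h b c \<and> h a b < 0) \<or>
    (x = c \<and> 0 < h c a \<and> h b c < 0)"
proof -
  have "0 < h a c \<longleftrightarrow> h c a < 0" "0 < h b a \<longleftrightarrow> h a b < 0" "0 < h c b \<longleftrightarrow> h b c < 0"
    using assms(1)[of a c] assms(1)[of b a] assms(1)[of c b] by linarith+
  then show ?thesis
    using cw_margin_dominant_iff[OF assms(1,2)] assms(3-5) by auto
qed

lemma no_cw_margin_cyclic_triangle:
  assumes "realizable h" "dominant_margin h {a, b, c}" "a \<noteq> b" "b \<noteq> c" "a \<noteq> c"
    and "0 \<le> h a b" "0 \<le> h b c" "0 \<le> h c a"
  shows "\<nexists>x. cw_margin h x"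
  using cw_margin_triangle_iff[OF realizable_swap[OF assms(1)] assms(2-5)] assms(6-8) by auto

lemma minimal_pair_margin_zero:
  fixes h :: "'a \<Rightarrow> 'a \<Rightarrow> int"
  assumes "\<And>x y. h y x = - h x y"
    and minimal: "\<And>S. S \<noteq> {} \<Longrightarrow> S \<subset> {a, b} \<Longrightarrow> \<not> (\<forall>x\<in>S. \<forall>y\<in>{a, b} - S. 0 < h x y)"
    and "a \<noteq> b"
  shows "h a b = 0"
proof -
  have "\<not> 0 < h a b" "\<not> 0 < h b a"
    using minimal[of "{a}"] minimal[of "{b}"] \<open>a \<noteq> b\<close> by auto
  then show ?thesis
    using assms(1)[of a b] by linarith
qed

lemma minimal_triangle_cyclic:
  fixes h :: "'a \<Rightarrow> 'a \<Rightarrow> int"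
  assumes "\<And>x y. h y x = - h x y"
    and minimal: "\<And>S. S \<noteq> {} \<Longrightarrow> S \<subset> {a, b, c} \<Longrightarrow> \<not> (\<forall>x\<in>S. \<forall>y\<in>{a, b, c} - S. 0 < h x y)"
    and "a \<noteq> b" "b \<noteq> c" "a \<noteq> c"
  shows "(0 \<le> h a b \<and> 0 \<le> h b c \<and> 0 \<le> h c a) \<or> (0 \<le> h a c \<and> 0 \<le> h c b \<and> 0 \<le> h b a)"
proof -
  have "{b, c} \<subset> {a, b, c}" "{a, c} \<subset> {a, b, c}" "{a, b} \<subset> {a, b, c}"
    using assms(3-5) by auto
  then have "\<not> (0 < h b a \<and> 0 < h c a)" "\<not> (0 < h a b \<and> 0 < h c b)" "\<not> (0 < h a c \<and> 0 < h b c)"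
    using minimal[of "{b, c}"] minimal[of "{a, c}"] minimal[of "{a, b}"] assms(3-5) by auto
  moreover have "\<not> (0 < h a b \<and> 0 < h a c)" "\<not> (0 < h b a \<and> 0 < h b c)" "\<not> (0 < h c a \<and> 0 < h c b)"
    using minimal[of "{a}"] minimal[of "{b}"] minimal[of "{c}"] assms(3-5) by auto
  ultimately show ?thesis
    using assms(1)[of a b] assms(1)[of b c] assms(1)[of c a] by linarith
qed

definition triangle_shift ::
    "'a \<Rightarrow> 'a \<Rightarrow> 'a \<Rightarrow> ('a \<Rightarrow> 'a \<Rightarrow> int) \<Rightarrow> int \<Rightarrow> int \<Rightarrow> int \<Rightarrow> 'a \<Rightarrow> 'a \<Rightarrow> int" where
  "triangle_shift a b c h i j k x y =
     h x y + 2 * (i * edge_margin a b x y + j * edge_margin b c x y + k * edge_margin c a x y)"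

lemma triangle_shift_zero: "triangle_shift a b c h 0 0 0 = h"
  by (simp add: triangle_shift_def fun_eq_iff)

lemma triangle_shift_triangle_shift:
  "triangle_shift a b c (triangle_shift a b c h i j k) i' j' k'
     = triangle_shift a b c h (i + i') (j + j') (k + k')"
  by (simp add: triangle_shift_def fun_eq_iff algebra_simps)

lemma triangle_shift_outside:
  assumes "x \<notin> {a, b, c} \<or> y \<notin> {a, b, c}"
  shows "triangle_shift a b c h i j k x y = h x y"
proof -
  have "edge_margin a b x y = 0" "edge_margin b c x y = 0" "edge_margin c a x y = 0"
    using assms by (auto simp: edge_margin_def)
  then show ?thesis
    by (simp add: triangle_shift_def)
qed

lemma dominant_margin_triangle_shift:
  "dominant_margin h {a, b, c} \<Longrightarrow> dominant_margin (triangle_shift a b c h i j k) {a, b, c}"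
  by (simp add: dominant_margin_def triangle_shift_outside)

context
  fixes a b c :: 'a
  assumes distinct: "a \<noteq> b" "b \<noteq> c" "a \<noteq> c"
begin

lemma triangle_shift_edges:
  "triangle_shift a b c h i j k a b = h a b + 2 * i"
  "triangle_shift a b c h i j k b a = h b a - 2 * i"
  "triangle_shift a b c h i j k b c = h b c + 2 * j"
  "triangle_shift a b c h i j k c b = h c b - 2 * j"
  "triangle_shift a b c h i j k c a = h c a + 2 * k"
  "triangle_shift a b c h i j k a c = h a c - 2 * k"
  using distinct by (simp_all add: triangle_shift_def edge_margin_def)

lemma shift_margin_triangle_shift:
  "shift_margin a b (triangle_shift a b c h i j k) = triangle_shift a b c h (i + 1) j k"
  "shift_margin b a (triangle_shift a b c h i j k) = triangle_shift a b c h (i - 1) j k"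
  "shift_margin b c (triangle_shift a b c h i j k) = triangle_shift a b c h i (j + 1) k"
  "shift_margin c b (triangle_shift a b c h i j k) = triangle_shift a b c h i (j - 1) k"
  "shift_margin c a (triangle_shift a b c h i j k) = triangle_shift a b c h i j (k + 1)"
  "shift_margin a c (triangle_shift a b c h i j k) = triangle_shift a b c h i j (k - 1)"
  using distinct edge_margin_swap[of a b] edge_margin_swap[of b c] edge_margin_swap[of c a]
  by (simp_all add: shift_margin_def triangle_shift_def fun_eq_iff algebra_simps)

end

lemma realizable_triangle_shift:
  fixes h :: "'a::finite \<Rightarrow> 'a \<Rightarrow> int"
  assumes "realizable h" "a \<noteq> b" "b \<noteq> c" "a \<noteq> c"
  shows "realizable (triangle_shift a b c h i j k)"
proof -
  let ?h1 = "\<lambda>x y. h x y + 2 * i * edge_margin a b x y"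
  let ?h2 = "\<lambda>x y. ?h1 x y + 2 * j * edge_margin b c x y"
  have "realizable (\<lambda>x y. ?h2 x y + 2 * k * edge_margin c a x y)"
    using assms by (intro realizable_edge_shift) auto
  moreover have "triangle_shift a b c h i j k = (\<lambda>x y. ?h2 x y + 2 * k * edge_margin c a x y)"
    by (simp add: triangle_shift_def fun_eq_iff algebra_simps)
  ultimately show ?thesis
    by simp
qed

section \<open>Outcome changes compatible with strategyproofness\<close>

text \<open>The changes \<open>Z \<leadsto> X\<close> of the outcome that strategyproofness allows when a voter
  ranking \<open>s\<close> directly above \<open>t\<close> swaps the two: any other change is a Fishburn improvement
  for some such voter (\<open>fishburn_adjacent_rank_exists\<close>).\<close>

definition swap_consistent :: "'a \<Rightarrow> 'a \<Rightarrow> 'a set \<Rightarrow> 'a set \<Rightarrow> bool" where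
  "swap_consistent s t Z X \<longleftrightarrow>
     X = Z \<or> (s \<in> Z \<and> t \<in> X \<and> \<not> (s \<in> X \<and> t \<in> Z)) \<or> (s \<in> X - Z \<and> t \<in> Z - X)"

lemma swap_consistent_mem: "swap_consistent s t Z X \<Longrightarrow> s \<in> X \<Longrightarrow> t \<in> X \<Longrightarrow> s \<in> Z"
  by (auto simp: swap_consistent_def)

lemma swap_consistent_eq:
  "swap_consistent s t Z X \<Longrightarrow> s \<in> X \<Longrightarrow> t \<in> X \<Longrightarrow> s \<in> Z \<Longrightarrow> t \<in> Z \<Longrightarrow> X = Z"
  by (auto simp: swap_consistent_def)

lemma swap_consistent_singleton: "swap_consistent s t Z {t} \<Longrightarrow> Z \<noteq> {t} \<Longrightarrow> s \<in> Z"
  by (auto simp: swap_consistent_def)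

lemma fishburn_adjacent_rank_exists:
  fixes X Z :: "'a::finite set"
  assumes "s \<noteq> t" "\<not> swap_consistent s t Z X"
  obtains r :: "'a \<Rightarrow> nat \<times> nat" where "inj r" "adjacent r s t" "fishburn (rank_order r) X Z"
proof -
  txt \<open>Rank \<open>X - Z\<close> above \<open>X \<inter> Z\<close> above \<open>Z - X\<close> above the rest, and put \<open>s\<close> and
    \<open>t\<close> into a block of their own next to the layer of \<open>t\<close> (of \<open>s\<close> if \<open>t\<close> lies in no
    layer); this respects all Fishburn comparisons unless the change is swap-consistent.\<close>
  define layer :: "'a \<Rightarrow> nat" where
    "layer x = (if x \<in> X - Z then 0 else if x \<in> X \<inter> Z then 1 else if x \<in> Z - X then 2 else 3)" for x
  define key where
    "key x = (if x \<in> {s, t} then if layer t \<le> 2 then 2 * layer t + 1 else 2 * layer s + 3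
              else 2 * layer x + 2)" for x
  obtain r :: "'a \<Rightarrow> nat \<times> nat"
    where r: "inj r" "adjacent r s t" "\<And>x y. key x < key y \<Longrightarrow> r x < r y"
    using adjacent_rank_exists[of s t key] assms(1) by (auto simp: key_def)
  have "r x < r y" if "layer x < layer y" "layer y \<le> 2" for x y
  proof (cases "(x, y) = (s, t)")
    case True
    then show ?thesis
      using r(2) by (simp add: adjacent_def)
  next
    case False
    have "key x < key y"
      using that False assms unfolding key_def layer_def swap_consistent_def
      by (auto split: if_splits)
    then show ?thesis
      by (rule r(3))
  qed
  then have "fishburn (rank_order r) X Z"
    using assms(2) unfolding fishburn_def rank_order_def swap_consistent_def
    by (auto simp: layer_def)
  with r(1,2) show ?thesis
    using that by blast
qed

lemma swap_consistent_cube_mem: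
  fixes G :: "int \<Rightarrow> int \<Rightarrow> int \<Rightarrow> 'a set"
  assumes mem: "c \<in> G 1 0 0" "a \<in> G 0 1 0" "b \<in> G 0 0 1" "c \<in> G 1 1 0" "a \<in> G 0 1 1" "b \<in> G 1 0 1"
    and edge: "swap_consistent a b (G 1 1 0) (G 0 1 0)" "swap_consistent b c (G 1 1 0) (G 1 0 0)"
      "swap_consistent b c (G 0 1 1) (G 0 0 1)" "swap_consistent c a (G 0 1 1) (G 0 1 0)"
      "swap_consistent c a (G 1 0 1) (G 1 0 0)" "swap_consistent a b (G 1 0 1) (G 0 0 1)"
      "swap_consistent a b (G 1 1 1) (G 0 1 1)" "swap_consistent b c (G 1 1 1) (G 1 0 1)"
      "swap_consistent c a (G 1 1 1) (G 1 1 0)"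
  shows "b \<in> G 1 1 0"
proof (rule ccontr)
  assume b110: "b \<notin> G 1 1 0"
  have a110: "a \<in> G 1 1 0"
    using edge(1) mem(2) b110 unfolding swap_consistent_def by blast
  have a100: "a \<in> G 1 0 0"
    using edge(2) mem(1) a110 b110 unfolding swap_consistent_def by blast
  have c101: "c \<in> G 1 0 1" and a101: "a \<notin> G 1 0 1"
    using edge(2,5) mem(1,6) a100 b110 unfolding swap_consistent_def by blast+
  have b111: "b \<in> G 1 1 1"
    using swap_consistent_mem[OF edge(8) mem(6) c101] .
  have c111: "c \<in> G 1 1 1"
    using swap_consistent_mem[OF edge(9) mem(4) a110] .
  have a111: "a \<notin> G 1 1 1"
  proof
    assume "a \<in> G 1 1 1"
    then have "G 1 1 0 = G 1 1 1"
      using swap_consistent_eq[OF edge(9) mem(4) a110 c111] by blast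
    then show False
      using b110 b111 by simp
  qed
  have c001: "c \<in> G 0 0 1"
    using edge(6) mem(3,6) a101 c101 unfolding swap_consistent_def by blast
  have "b \<notin> G 0 1 1"
    using edge(7) mem(5) a111 unfolding swap_consistent_def by blast
  then show False
    using swap_consistent_mem[OF edge(3) mem(3) c001] by contradiction
qed

lemma swap_consistent_cube:
  fixes G :: "int \<Rightarrow> int \<Rightarrow> int \<Rightarrow> 'a set"
  assumes mem: "c \<in> G 1 0 0" "a \<in> G 0 1 0" "b \<in> G 0 0 1" "c \<in> G 1 1 0" "a \<in> G 0 1 1" "b \<in> G 1 0 1"
    and edge: "swap_consistent a b (G 1 1 0) (G 0 1 0)" "swap_consistent b c (G 1 1 0) (G 1 0 0)"
      "swap_consistent b c (G 0 1 1) (G 0 0 1)" "swap_consistent c a (G 0 1 1) (G 0 1 0)"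
      "swap_consistent c a (G 1 0 1) (G 1 0 0)" "swap_consistent a b (G 1 0 1) (G 0 0 1)"
      "swap_consistent a b (G 1 1 1) (G 0 1 1)" "swap_consistent b c (G 1 1 1) (G 1 0 1)"
      "swap_consistent c a (G 1 1 1) (G 1 1 0)"
  shows "{a, b, c} \<subseteq> G 1 0 0 \<inter> G 0 1 0 \<inter> G 0 0 1 \<inter> G 0 1 1"
proof -
  txt \<open>The hypotheses are invariant under rotating \<open>a, b, c\<close> together with the coordinates.\<close>
  have "b \<in> G 1 1 0"
    by (rule swap_consistent_cube_mem) (fact mem edge)+
  moreover have "c \<in> G 0 1 1"
    by (rule swap_consistent_cube_mem[where G = "\<lambda>i j k. G k i j"]) (fact mem edge)+
  moreover have "a \<in> G 1 0 1"
    by (rule swap_consistent_cube_mem[where G = "\<lambda>i j k. G j k i"]) (fact mem edge)+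
  ultimately have "{a, b, c} \<subseteq> G 1 1 1"
    using mem edge unfolding swap_consistent_def by blast
  then show ?thesis
    using mem edge unfolding swap_consistent_def by blast
qed

section \<open>Strategyproof pairwise SCCs\<close>

locale pairwise_sp_scc =
  fixes f :: "'a::finite profile \<Rightarrow> 'a set"
  assumes pairwise: "pairwise_scc f"
    and condorcet: "strongly_condorcet_consistent f"
    and strategyproof: "strategyproof f"
begin

text \<open>Only meaningful for realizable margin functions; otherwise \<open>SOME\<close> picks an arbitrary
  profile.\<close>

definition outcome :: "('a \<Rightarrow> 'a \<Rightarrow> int) \<Rightarrow> 'a set" where
  "outcome h = f (SOME R. is_profile R \<and> margin R = h)"

lemma outcome_margin: "is_profile R \<Longrightarrow> outcome (margin R) = f R"
  using someI[of "\<lambda>R'. is_profile R' \<and> margin R' = margin R" R] pairwise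
  unfolding outcome_def pairwise_scc_def by metis

lemma outcome_eq_singleton_iff: "realizable h \<Longrightarrow> outcome h = {x} \<longleftrightarrow> cw_margin h x"
  using condorcet outcome_margin condorcet_winner_iff_cw_margin
  unfolding realizable_def strongly_condorcet_consistent_def by metis

lemma swap_consistent_outcome:
  assumes "realizable h" "s \<noteq> t"
  shows "swap_consistent s t (outcome h) (outcome (shift_margin t s h))"
proof (rule ccontr)
  assume "\<not> ?thesis"
  then obtain r :: "'a \<Rightarrow> nat \<times> nat" where r: "inj r" "adjacent r s t"
    and better: "fishburn (rank_order r) (outcome (shift_margin t s h)) (outcome h)"
    using fishburn_adjacent_rank_exists assms(2) by blast
  obtain R where R: "is_profile R" "margin R = h"
    using assms(1) by (auto simp: realizable_def)
  obtain R1 R2 i where "is_profile R1" "is_profile R2" "i \<in> dom R1" "dom R2 = dom R1"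
    "\<And>j. j \<noteq> i \<Longrightarrow> R2 j = R1 j" "the (R1 i) = rank_order r"
    "margin R1 = h" "margin R2 = shift_margin t s h"
    using profile_with_swapping_voter[OF R(1) r] R(2) by metis
  with strategyproof better show False
    unfolding strategyproof_def by (metis outcome_margin)
qed

lemma mem_outcome_if_shift_winner:
  assumes "realizable h" "s \<noteq> t" "\<nexists>x. cw_margin h x" "cw_margin (shift_margin t s h) t"
  shows "s \<in> outcome h"
proof (rule swap_consistent_singleton)
  have "outcome (shift_margin t s h) = {t}"
    using outcome_eq_singleton_iff[OF realizable_shift_margin[OF assms(1,2)]] assms(4) by blast
  then show "swap_consistent s t (outcome h) {t}"
    using swap_consistent_outcome[OF assms(1,2)] by simp
  show "outcome h \<noteq> {t}"
    using assms(3) outcome_eq_singleton_iff[OF assms(1)] by blast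
qed

context
  fixes a b c :: 'a and h0 :: "'a \<Rightarrow> 'a \<Rightarrow> int"
  assumes distinct: "a \<noteq> b" "b \<noteq> c" "a \<noteq> c"
    and tied: "realizable h0" "dominant_margin h0 {a, b, c}" "h0 a b = 0" "h0 b c = 0" "h0 c a = 0"
begin

abbreviation outcome_at :: "int \<Rightarrow> int \<Rightarrow> int \<Rightarrow> 'a set" where
  "outcome_at i j k \<equiv> outcome (triangle_shift a b c h0 i j k)"

lemma cw_margin_tied_iff:
  "cw_margin (triangle_shift a b c h0 i j k) x \<longleftrightarrow>
     (x = a \<and> 0 < i \<and> k < 0) \<or> (x = b \<and> 0 < j \<and> i < 0) \<or> (x = c \<and> 0 < k \<and> j < 0)"
  using cw_margin_triangle_iff[OF realizable_swap[OF realizable_triangle_shift[OF tied(1) distinct]]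
      dominant_margin_triangle_shift[OF tied(2)] distinct] tied(3-5)
  by (auto simp: triangle_shift_edges[OF distinct])

lemma swap_consistent_tied:
  assumes "s \<noteq> t"
    and "shift_margin t s (triangle_shift a b c h0 i j k) = triangle_shift a b c h0 i' j' k'"
  shows "swap_consistent s t (outcome_at i j k) (outcome_at i' j' k')"
  using swap_consistent_outcome[OF realizable_triangle_shift[OF tied(1) distinct] assms(1),
      of i j k] assms(2)
  by simp

lemma mem_outcome_tied_if_shift_winner:
  assumes "s \<noteq> t"
    and "shift_margin t s (triangle_shift a b c h0 i j k) = triangle_shift a b c h0 i' j' k'"
    and "\<nexists>x. cw_margin (triangle_shift a b c h0 i j k) x"
    and "cw_margin (triangle_shift a b c h0 i' j' k') t"
  shows "s \<in> outcome_at i j k"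
  using mem_outcome_if_shift_winner[OF realizable_triangle_shift[OF tied(1) distinct] assms(1),
      of i j k] assms(2-4)
  by simp

lemma mem_outcome_tied_if_shift_mem:
  assumes "s \<noteq> t"
    and "shift_margin t s (triangle_shift a b c h0 i j k) = triangle_shift a b c h0 i' j' k'"
    and "s \<in> outcome_at i' j' k'" "t \<in> outcome_at i' j' k'"
  shows "s \<in> outcome_at i j k"
  using swap_consistent_mem[OF swap_consistent_tied[OF assms(1,2)] assms(3,4)] .

lemma tied_triangle_subset_outcome_0:
  assumes "j \<in> {0, 1}" "k \<in> {0, 1}"
  shows "{a, b, c} \<subseteq> outcome_at 0 j k"
proof -
  note simps =
    distinct distinct[symmetric] shift_margin_triangle_shift[OF distinct] cw_margin_tied_iff
  note winner = mem_outcome_tied_if_shift_winner and shift_mem = mem_outcome_tied_if_shift_mem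
  have "c \<in> outcome_at 1 0 0" by (rule winner[of c a 1 0 0 1 0 "-1"]) (simp_all add: simps)
  moreover have "a \<in> outcome_at 0 1 0" by (rule winner[of a b 0 1 0 "-1" 1 0]) (simp_all add: simps)
  moreover have "b \<in> outcome_at 0 0 1" by (rule winner[of b c 0 0 1 0 "-1" 1]) (simp_all add: simps)
  moreover have "c \<in> outcome_at 1 1 0" by (rule winner[of c a 1 1 0 1 1 "-1"]) (simp_all add: simps)
  moreover have "a \<in> outcome_at 0 1 1" by (rule winner[of a b 0 1 1 "-1" 1 1]) (simp_all add: simps)
  moreover have "b \<in> outcome_at 1 0 1" by (rule winner[of b c 1 0 1 1 "-1" 1]) (simp_all add: simps)
  moreover have
    "swap_consistent a b (outcome_at 1 1 0) (outcome_at 0 1 0)"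
    "swap_consistent b c (outcome_at 1 1 0) (outcome_at 1 0 0)"
    "swap_consistent b c (outcome_at 0 1 1) (outcome_at 0 0 1)"
    "swap_consistent c a (outcome_at 0 1 1) (outcome_at 0 1 0)"
    "swap_consistent c a (outcome_at 1 0 1) (outcome_at 1 0 0)"
    "swap_consistent a b (outcome_at 1 0 1) (outcome_at 0 0 1)"
    "swap_consistent a b (outcome_at 1 1 1) (outcome_at 0 1 1)"
    "swap_consistent b c (outcome_at 1 1 1) (outcome_at 1 0 1)"
    "swap_consistent c a (outcome_at 1 1 1) (outcome_at 1 1 0)"
    by (rule swap_consistent_tied; simp add: simps)+
  ultimately have cube:
    "{a, b, c} \<subseteq> outcome_at 1 0 0 \<inter> outcome_at 0 1 0 \<inter> outcome_at 0 0 1 \<inter> outcome_at 0 1 1"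
    by (rule swap_consistent_cube[where G = outcome_at])
  have "a \<in> outcome_at 0 0 0"
    by (rule shift_mem[of a c 0 0 0 0 0 1]) (use cube in \<open>simp_all add: simps\<close>)
  moreover have "b \<in> outcome_at 0 0 0"
    by (rule shift_mem[of b a 0 0 0 1 0 0]) (use cube in \<open>simp_all add: simps\<close>)
  moreover have "c \<in> outcome_at 0 0 0"
    by (rule shift_mem[of c b 0 0 0 0 1 0]) (use cube in \<open>simp_all add: simps\<close>)
  ultimately show ?thesis
    using assms cube by auto
qed

lemma tied_triangle_subset_outcome_step:
  assumes "0 < m"
    and prev: "\<And>j k. j \<in> {0, 1} \<Longrightarrow> k \<in> {0, 1} \<Longrightarrow> {a, b, c} \<subseteq> outcome_at (m - 1) j k"
    and "j \<in> {0, 1}" "k \<in> {0, 1}"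
  shows "{a, b, c} \<subseteq> outcome_at m j k"
proof -
  note simps =
    distinct distinct[symmetric] shift_margin_triangle_shift[OF distinct] cw_margin_tied_iff
  note winner = mem_outcome_tied_if_shift_winner and shift_mem = mem_outcome_tied_if_shift_mem
  have a00: "a \<in> outcome_at m 0 0"
    by (rule shift_mem[of a b m 0 0 "m - 1" 0 0]) (use prev[of 0 0] in \<open>simp_all add: simps\<close>)
  have c00: "c \<in> outcome_at m 0 0"
    by (rule winner[of c a m 0 0 m 0 "-1"]) (use \<open>0 < m\<close> in \<open>simp_all add: simps\<close>)
  have a01: "a \<in> outcome_at m 0 1"
    by (rule shift_mem[of a b m 0 1 "m - 1" 0 1]) (use prev[of 0 1] in \<open>simp_all add: simps\<close>)
  have b01: "b \<in> outcome_at m 0 1"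
    by (rule winner[of b c m 0 1 m "-1" 1]) (use \<open>0 < m\<close> in \<open>simp_all add: simps\<close>)
  have c01: "c \<in> outcome_at m 0 1"
    by (rule shift_mem[of c a m 0 1 m 0 0]) (simp_all add: simps a00 c00)
  have "outcome_at m 0 1 = outcome_at m 0 0"
    by (rule swap_consistent_eq[OF swap_consistent_tied[of a c m 0 0 m 0 1]])
      (simp_all add: simps a00 c00 a01 c01)
  with b01 have b00: "b \<in> outcome_at m 0 0"
    by simp
  have a10: "a \<in> outcome_at m 1 0"
    by (rule shift_mem[of a b m 1 0 "m - 1" 1 0]) (use prev[of 1 0] in \<open>simp_all add: simps\<close>)
  have c10: "c \<in> outcome_at m 1 0"
    by (rule winner[of c a m 1 0 m 1 "-1"]) (use \<open>0 < m\<close> in \<open>simp_all add: simps\<close>)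
  have b10: "b \<in> outcome_at m 1 0"
    by (rule shift_mem[of b c m 1 0 m 0 0]) (simp_all add: simps b00 c00)
  have a11: "a \<in> outcome_at m 1 1"
    by (rule shift_mem[of a b m 1 1 "m - 1" 1 1]) (use prev[of 1 1] in \<open>simp_all add: simps\<close>)
  have b11: "b \<in> outcome_at m 1 1"
    by (rule shift_mem[of b c m 1 1 m 0 1]) (simp_all add: simps b01 c01)
  have c11: "c \<in> outcome_at m 1 1"
    by (rule shift_mem[of c a m 1 1 m 1 0]) (simp_all add: simps a10 c10)
  show ?thesis
    using assms(3,4) a00 b00 c00 a01 b01 c01 a10 b10 c10 a11 b11 c11 by auto
qed

lemma tied_triangle_subset_outcome:
  assumes "j \<in> {0, 1}" "k \<in> {0, 1}"
  shows "{a, b, c} \<subseteq> outcome_at (int n) j k"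
  using assms
proof (induction n arbitrary: j k)
  case 0
  then show ?case
    using tied_triangle_subset_outcome_0 by simp
next
  case (Suc n)
  then show ?case
    using tied_triangle_subset_outcome_step[of "int (Suc n)"] by simp
qed

end

lemma tied_edge_triangle_subset_outcome:
  assumes distinct: "a \<noteq> b" "b \<noteq> c" "a \<noteq> c"
    and h: "realizable h" "dominant_margin h {a, b, c}"
    and "h a b = 0" "0 \<le> h b c" "0 \<le> h c a" "h c a < 2"
  shows "{a, b, c} \<subseteq> outcome h"
proof -
  have "even (h c a - h a b)" "even (h b c - h a b)"
    using realizable_parity[OF h(1) distinct(3)[symmetric] distinct(1)]
      realizable_parity[OF h(1) distinct(2) distinct(1)] .
  then have "h c a = 0" "even (h b c)"
    using assms(6-9) by presburger+
  then obtain k where "h b c = 2 * k"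
    by blast
  define n where "n = nat k"
  with \<open>h b c = 2 * k\<close> \<open>0 \<le> h b c\<close> have n: "h b c = 2 * int n"
    by simp
  have dominant: "dominant_margin h {b, c, a}"
    using h(2) by (simp add: insert_commute)
  define h0 where "h0 = triangle_shift b c a h (- int n) 0 0"
  have "realizable h0" "dominant_margin h0 {b, c, a}" "h0 b c = 0" "h0 c a = 0" "h0 a b = 0"
    using h(1) dominant distinct n \<open>h a b = 0\<close> \<open>h c a = 0\<close>
    by (simp_all add: h0_def realizable_triangle_shift dominant_margin_triangle_shift
        triangle_shift_edges)
  then have "{b, c, a} \<subseteq> outcome (triangle_shift b c a h0 (int n) 0 0)"
    using tied_triangle_subset_outcome[of b c a h0] distinct by simp
  moreover have "triangle_shift b c a h0 (int n) 0 0 = h"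
    by (simp add: h0_def triangle_shift_triangle_shift triangle_shift_zero)
  ultimately show ?thesis
    by (simp add: insert_commute)
qed

lemma cyclic_triangle_last_mem_outcome:
  assumes distinct: "a \<noteq> b" "b \<noteq> c" "a \<noteq> c"
    and h: "realizable h" "dominant_margin h {a, b, c}"
    and nonneg: "0 \<le> h a b" "0 \<le> h b c" "0 \<le> h c a"
    and smaller: "\<And>h'. realizable h' \<Longrightarrow> dominant_margin h' {a, b, c} \<Longrightarrow>
      0 \<le> h' a b \<Longrightarrow> 0 \<le> h' b c \<Longrightarrow> 0 \<le> h' c a \<Longrightarrow>
      h' a b + h' b c + h' c a < h a b + h b c + h c a \<Longrightarrow> {a, b, c} \<subseteq> outcome h'"
  shows "c \<in> outcome h"
proof -
  let ?h' = "triangle_shift a b c h 0 0 (- 1)"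
  have shift: "shift_margin a c h = ?h'"
    using shift_margin_triangle_shift(6)[OF distinct, of h 0 0 0] by (simp add: triangle_shift_zero)
  have h': "realizable ?h'" "dominant_margin ?h' {a, b, c}"
    using h distinct by (simp_all add: realizable_triangle_shift dominant_margin_triangle_shift)
  consider "2 \<le> h c a" | "h c a < 2" "0 < h a b" | "h c a < 2" "h a b = 0"
    using nonneg by linarith
  then show ?thesis
  proof cases
    case 1
    have "{a, b, c} \<subseteq> outcome ?h'"
      by (rule smaller) (use 1 nonneg h' in \<open>simp_all add: triangle_shift_edges[OF distinct]\<close>)
    then show ?thesis
      using swap_consistent_mem[OF swap_consistent_outcome[OF h(1) distinct(3)[symmetric]]]
      by (simp add: shift)
  next
    case 2
    then have "cw_margin ?h' a"
      using cw_margin_triangle_iff[OF realizable_swap[OF h'(1)] h'(2) distinct, of a]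
      by (simp add: triangle_shift_edges[OF distinct])
    then show ?thesis
      using mem_outcome_if_shift_winner[OF h(1) distinct(3)[symmetric]
          no_cw_margin_cyclic_triangle[OF h distinct nonneg]]
      by (simp add: shift)
  next
    case 3
    then show ?thesis
      using tied_edge_triangle_subset_outcome[OF distinct h] nonneg by simp
  qed
qed

lemma cyclic_triangle_subset_outcome:
  assumes "a \<noteq> b" "b \<noteq> c" "a \<noteq> c" "realizable h" "dominant_margin h {a, b, c}"
    and "0 \<le> h a b" "0 \<le> h b c" "0 \<le> h c a"
  shows "{a, b, c} \<subseteq> outcome h"
  using assms
proof (induction "nat (h a b + h b c + h c a)" arbitrary: a b c h rule: less_induct)
  case less
  have last: "z \<in> outcome h"
    if "{x, y, z} = {a, b, c}" "x \<noteq> y" "y \<noteq> z" "x \<noteq> z" "0 \<le> h x y" "0 \<le> h y z" "0 \<le> h z x"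
      "h x y + h y z + h z x = h a b + h b c + h c a" for x y z
  proof (rule cyclic_triangle_last_mem_outcome[of x y z h])
    fix h'
    assume "realizable h'" "dominant_margin h' {x, y, z}" "0 \<le> h' x y" "0 \<le> h' y z" "0 \<le> h' z x"
      "h' x y + h' y z + h' z x < h x y + h y z + h z x"
    then show "{x, y, z} \<subseteq> outcome h'"
      using less.hyps[of h' x y z] that by simp
  qed (use that less.prems in simp_all)
  show ?case
    using last[of a b c] last[of b c a] last[of c a b] less.prems
    by (simp add: insert_commute add_ac)
qed

lemma pair_subset_outcome:
  assumes "realizable h" "dominant_margin h {a, b}" "a \<noteq> b" "h a b = 0"
  shows "{a, b} \<subseteq> outcome h"
proof -
  have "h b a = 0"
    using realizable_swap[OF assms(1), where x = a and y = b] assms(4) by simp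
  have no_winner: "\<nexists>x. cw_margin h x"
    using cw_margin_dominant_iff[OF realizable_swap[OF assms(1)] assms(2)] assms(3,4) \<open>h b a = 0\<close>
    by auto
  have "cw_margin (shift_margin b a h) b" "cw_margin (shift_margin a b h) a"
    using assms(2-4) \<open>h b a = 0\<close>
    unfolding cw_margin_def shift_margin_def edge_margin_def dominant_margin_def by auto
  then show ?thesis
    using mem_outcome_if_shift_winner[OF assms(1) assms(3) no_winner]
      mem_outcome_if_shift_winner[OF assms(1) assms(3)[symmetric] no_winner] by simp
qed

lemma minimal_dominant_subset_outcome:
  assumes realizable: "realizable h" and dominant: "dominant_margin h T" "T \<noteq> {}" "card T < 4"
    and minimal: "\<And>S. S \<noteq> {} \<Longrightarrow> S \<subset> T \<Longrightarrow> \<not> (\<forall>x\<in>S. \<forall>y\<in>T - S. 0 < h x y)"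
  shows "T \<subseteq> outcome h"
proof -
  note antisym = realizable_swap[OF realizable]
  have "0 < card T"
    using dominant(2) by (simp add: card_gt_0_iff)
  then have "card T = 1 \<or> card T = 2 \<or> card T = 3"
    using dominant(3) by linarith
  then consider x where "T = {x}" | x y where "T = {x, y}" "x \<noteq> y"
    | a b c where "T = {a, b, c}" "a \<noteq> b" "b \<noteq> c" "a \<noteq> c"
    by (auto simp: card_1_singleton_iff card_2_iff card_3_iff)
  then show ?thesis
  proof cases
    case (1 x)
    then have "cw_margin h x"
      using cw_margin_dominant_iff[OF antisym dominant(1,2)] by simp
    then show ?thesis
      using outcome_eq_singleton_iff[OF realizable, of x] 1 by simp
  next
    case (2 x y)
    then show ?thesis
      using pair_subset_outcome[OF realizable] dominant(1)
        minimal_pair_margin_zero[OF antisym minimal[unfolded 2]] by simp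
  next
    case (3 a b c)
    then have "(0 \<le> h a b \<and> 0 \<le> h b c \<and> 0 \<le> h c a) \<or> (0 \<le> h a c \<and> 0 \<le> h c b \<and> 0 \<le> h b a)"
      using minimal_triangle_cyclic[OF antisym minimal[unfolded 3]] by simp
    then show ?thesis
      using cyclic_triangle_subset_outcome[of a b c h] cyclic_triangle_subset_outcome[of a c b h]
        realizable dominant(1) 3 by (auto simp: insert_commute)
  qed
qed

lemma TC_subset_if_card_less_4:
  assumes "is_profile R" "card (TC R) < 4"
  shows "TC R \<subseteq> f R"
proof -
  have "TC R \<subseteq> outcome (margin R)"
    by (rule minimal_dominant_subset_outcome)
      (use assms TC_least_dominant(1)[of R] TC_minimal[of _ R] in
        \<open>auto simp: realizable_def dominant_iff_dominant_margin\<close>)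
  then show ?thesis
    using outcome_margin[OF assms(1)] by simp
qed

end

theorem lemma7:
  fixes f :: "'a::finite profile \<Rightarrow> 'a set"
  assumes "card (UNIV :: 'a set) \<ge> 3"
    and "is_SCC f"
    and "pairwise_scc f"
    and "strongly_condorcet_consistent f"
    and "strategyproof f"
    and "homogeneous f"
  shows "k_f f \<ge> 4"
proof -
  interpret pairwise_sp_scc f
    using assms(3-5) by unfold_locales
  have "4 \<in> {k \<in> {1..card (UNIV :: 'a set) + 1}.
      \<forall>R. is_profile R \<longrightarrow> card (TC R) < k \<longrightarrow> TC R \<subseteq> f R}"
    using assms(1) TC_subset_if_card_less_4 by auto
  then show ?thesis
    unfolding k_f_def by (rule Max_ge[rotated]) simp
qed

end
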